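(* Let $\mathcal E,\mathcal D$ be sets, $K,\eta\in\mathbb N$, $\psi:\mathcal E^*\times[K]\to\mathbb R^\eta$ a function, and $\mathcal G$ a finite nonempty set of functions $\{+,-,0\}^K\to\mathcal D$. Then $\mathrm{Ndim}(\mathcal F_{\psi,\mathcal G})\le2\eta\log(8eK)+2\log|\mathcal G|=O(\eta\log K+\log|\mathcal G|)$.
   Context: $\mathcal E^*=\bigcup_{n\ge1}\mathcal E^n$. For $\vec w\in\mathbb R^\eta$ and $g\in\mathcal G$, $f_{\vec w,g}(P)=g(\mathrm{sign}(\psi(P,1)\cdot\vec w),\dots,\mathrm{sign}(\psi(P,K)\cdot\vec w))$, with sign values $+,-,0$; $\mathcal F_{\psi,\mathcal G}=\{f_{\vec w,g}:\vec w\in\mathbb R^\eta,g\in\mathcal G\}$. Natarajan dimension: a finite $\mathcal P\subseteq\mathcal E^*$ is shattered by $\mathcal F$ if there are $f^0,f^1:\mathcal E^*\to\mathcal D$ with $f^0(P)\ne f^1(P)$ on $\mathcal P$ such that for every $B\subseteq\mathcal P$ some $f\in\mathcal F$ equals $f^0$ on $B$ and $f^1$ on $\mathcal P\setminus B$; $\mathrm{Ndim}$ is the largest size of a shattered set. Logarithms are base 2. *)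

theory Defs
  imports Complex_Main "HOL-Library.Extended_Nat"
begin

datatype sgn = Pos | Neg | Zer

definition sgn_of :: "real \<Rightarrow> sgn" where
  "sgn_of x = (if x > 0 then Pos else if x < 0 then Neg else Zer)"

definition Estar :: "'e list set" where
  "Estar = {xs. xs \<noteq> []}"

text \<open>Vectors in R^eta are functions nat => real; only coordinates i < eta matter.
  psi P k i is the i-th coordinate of psi(P,k), for k in {1..K}, i < eta.\<close>
definition dotp :: "nat \<Rightarrow> (nat \<Rightarrow> real) \<Rightarrow> (nat \<Rightarrow> real) \<Rightarrow> real" where
  "dotp eta u v = (\<Sum>i<eta. u i * v i)"

text \<open>Sign vectors in {+,-,0}^K are lists of length K; entry j is the sign for index j+1.\<close>
definition f_wg :: "nat \<Rightarrow> nat \<Rightarrow> ('e list \<Rightarrow> nat \<Rightarrow> nat \<Rightarrow> real)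
    \<Rightarrow> (nat \<Rightarrow> real) \<Rightarrow> (sgn list \<Rightarrow> 'd) \<Rightarrow> 'e list \<Rightarrow> 'd" where
  "f_wg K eta psi w g P = g (map (\<lambda>k. sgn_of (dotp eta (psi P k) w)) [1..<K+1])"

definition F_class :: "nat \<Rightarrow> nat \<Rightarrow> ('e list \<Rightarrow> nat \<Rightarrow> nat \<Rightarrow> real)
    \<Rightarrow> (sgn list \<Rightarrow> 'd) set \<Rightarrow> ('e list \<Rightarrow> 'd) set" where
  "F_class K eta psi G = {f_wg K eta psi w g | w g. g \<in> G}"

definition N_shatters :: "('e list \<Rightarrow> 'd) set \<Rightarrow> 'e list set \<Rightarrow> bool" where
  "N_shatters F PP \<longleftrightarrow> finite PP \<and> PP \<subseteq> Estar \<and>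
     (\<exists>f0 f1. (\<forall>P\<in>PP. f0 P \<noteq> f1 P) \<and>
        (\<forall>B. B \<subseteq> PP \<longrightarrow> (\<exists>f\<in>F. (\<forall>P\<in>B. f P = f0 P) \<and> (\<forall>P\<in>PP - B. f P = f1 P))))"

definition Ndim :: "('e list \<Rightarrow> 'd) set \<Rightarrow> enat" where
  "Ndim F = Sup {enat (card PP) | PP. N_shatters F PP}"

end

theory Submission
  imports Defs "HOL-Library.FuncSet"
begin

text \<open>On a finite set \<open>PP\<close>, a member of \<open>F_class K eta psi G\<close> is determined by
  \<open>g \<in> G\<close> together with the sign pattern of the \<open>m = |PP| K\<close> linear functionals
  \<open>w \<mapsto> \<psi>(P,k) \<cdot> w\<close> on \<open>\<real>^\<eta>\<close>. Such sign patterns number at most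
  \<open>\<Sum>i\<le>\<eta>. (m choose i) 2^i\<close>: adding one functional \<open>h\<close> splits a pattern only if
  the pattern is already realised on the hyperplane \<open>h \<cdot> w = 0\<close>, a copy of \<open>\<real>^(\<eta>-1)\<close>.
  Shattering \<open>PP\<close> needs \<open>2^d\<close> distinct restrictions, \<open>d = |PP|\<close>, so
  \<open>2^d \<le> |G| (2e dK/\<eta>)^\<eta>\<close>, and solving for \<open>d\<close> gives the bound.\<close>

definition dot :: "'i set \<Rightarrow> ('i \<Rightarrow> real) \<Rightarrow> ('i \<Rightarrow> real) \<Rightarrow> real" where
  "dot I u w = (\<Sum>i\<in>I. u i * w i)"

definition sign_pattern :: "'i set \<Rightarrow> 'j set \<Rightarrow> ('j \<Rightarrow> 'i \<Rightarrow> real) \<Rightarrow> ('i \<Rightarrow> real) \<Rightarrow> 'j \<Rightarrow> sgn"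
  where "sign_pattern I J U w = restrict (\<lambda>j. sgn_of (dot I (U j) w)) J"

definition sign_patterns :: "'i set \<Rightarrow> 'j set \<Rightarrow> ('j \<Rightarrow> 'i \<Rightarrow> real) \<Rightarrow> ('j \<Rightarrow> sgn) set"
  where "sign_patterns I J U = range (sign_pattern I J U)"

definition sign_pattern_bound :: "nat \<Rightarrow> nat \<Rightarrow> nat" where
  "sign_pattern_bound m k = (\<Sum>i\<le>k. (m choose i) * 2 ^ i)"

lemma sign_pattern_bound_0_left [simp]: "sign_pattern_bound 0 k = 1"
  unfolding sign_pattern_bound_def by (simp add: sum.atMost_shift)

lemma sign_pattern_bound_0_right [simp]: "sign_pattern_bound m 0 = 1"
  by (simp add: sign_pattern_bound_def)

lemma sign_pattern_bound_Suc_Suc: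
  "sign_pattern_bound (Suc m) (Suc k) = sign_pattern_bound m (Suc k) + 2 * sign_pattern_bound m k"
proof -
  have "sign_pattern_bound (Suc m) (Suc k) = 1 + (\<Sum>i\<le>k. (Suc m choose Suc i) * 2 ^ Suc i)"
    unfolding sign_pattern_bound_def by (subst sum.atMost_Suc_shift) simp
  also have "\<dots> = 1 + (\<Sum>i\<le>k. (m choose Suc i) * 2 ^ Suc i) + 2 * (\<Sum>i\<le>k. (m choose i) * 2 ^ i)"
    by (simp add: sum.distrib sum_distrib_left algebra_simps)
  also have "1 + (\<Sum>i\<le>k. (m choose Suc i) * 2 ^ Suc i) = sign_pattern_bound m (Suc k)"
    unfolding sign_pattern_bound_def by (subst sum.atMost_Suc_shift) simp
  finally show ?thesis
    unfolding sign_pattern_bound_def .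
qed

lemma sign_pattern_bound_le_Suc: "sign_pattern_bound m k \<le> sign_pattern_bound (Suc m) k"
  by (cases k) (simp_all add: sign_pattern_bound_Suc_Suc)

lemma UNIV_sgn: "UNIV = {Pos, Neg, Zer}"
  using sgn.exhaust by auto

lemma finite_UNIV_sgn [simp]: "finite (UNIV :: sgn set)"
  by (simp add: UNIV_sgn)

lemma finite_sign_patterns: "finite J \<Longrightarrow> finite (sign_patterns I J U)"
  by (rule finite_subset[of _ "PiE J (\<lambda>_. UNIV)"])
    (auto simp: sign_patterns_def sign_pattern_def intro!: finite_PiE)

lemma sign_pattern_insert:
  "a \<notin> J \<Longrightarrow> sign_pattern I (insert a J) U w = (sign_pattern I J U w)(a := sgn_of (dot I (U a) w))"
  by (auto simp: sign_pattern_def fun_eq_iff)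

lemma dot_convex_comb:
  "dot I u (\<lambda>i. t * w1 i + (1 - t) * w2 i) = t * dot I u w1 + (1 - t) * dot I u w2"
  unfolding dot_def by (simp add: algebra_simps sum.distrib sum_subtractf sum_distrib_left)

lemma sgn_of_convex_comb:
  assumes "0 < t" "t < 1" "sgn_of p = sgn_of q"
  shows "sgn_of (t * p + (1 - t) * q) = sgn_of p"
proof -
  have "0 < 1 - t" using assms(2) by simp
  then have "0 < t * p + (1 - t) * q" if "0 < p" "0 < q"
    using that assms(1) by (simp add: add_pos_pos)
  moreover have "t * p + (1 - t) * q < 0" if "p < 0" "q < 0"
    using that assms(1) \<open>0 < 1 - t\<close> by (simp add: add_neg_neg mult_pos_neg)
  ultimately show ?thesis
    using assms(3) unfolding sgn_of_def by (auto split: if_splits)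
qed

lemma sign_change_gives_hyperplane_pattern:
  assumes same: "sign_pattern I J U w1 = sign_pattern I J U w2"
    and differ: "sgn_of (dot I h w1) \<noteq> sgn_of (dot I h w2)"
  shows "sign_pattern I J U w1 \<in> sign_pattern I J U ` {w. dot I h w = 0}"
proof (cases "dot I h w1 = 0 \<or> dot I h w2 = 0")
  case True
  then show ?thesis using same by (metis (mono_tags) image_eqI mem_Collect_eq)
next
  case False
  define a b where "a = dot I h w1" and "b = dot I h w2"
  have ab: "a > 0 \<and> b < 0 \<or> a < 0 \<and> b > 0"
    using differ False unfolding a_def b_def sgn_of_def by (auto split: if_splits)
  \<comment> \<open>the point of the segment from \<open>w2\<close> to \<open>w1\<close> where \<open>h\<close> vanishes\<close>
  define t where "t = b / (b - a)"
  have t: "0 < t" "t < 1"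
    using ab unfolding t_def by (auto simp: divide_simps)
  define w where "w = (\<lambda>i. t * w1 i + (1 - t) * w2 i)"
  have "dot I h w = t * a + (1 - t) * b"
    unfolding w_def a_def b_def by (rule dot_convex_comb)
  also have "\<dots> = 0"
    using ab unfolding t_def by (auto simp: field_simps)
  finally have "dot I h w = 0" .
  moreover have "sgn_of (dot I (U j) w1) = sgn_of (dot I (U j) w2)" if "j \<in> J" for j
    using fun_cong[OF same, of j] that by (simp add: sign_pattern_def)
  then have "sign_pattern I J U w = sign_pattern I J U w1"
    using t unfolding sign_pattern_def w_def dot_convex_comb
    by (auto simp: fun_eq_iff sgn_of_convex_comb)
  ultimately show ?thesis by (metis (mono_tags) image_eqI mem_Collect_eq)
qed

lemma dot_eliminate_coordinate:
  assumes "finite I" "i0 \<in> I" "h i0 \<noteq> 0" "dot I h w = 0"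
  shows "dot I v w = dot (I - {i0}) (\<lambda>i. v i - v i0 * h i / h i0) w"
proof -
  have split: "dot I u w = u i0 * w i0 + dot (I - {i0}) u w" for u
    unfolding dot_def using assms(1,2) by (simp add: sum.remove)
  have "w i0 = - dot (I - {i0}) h w / h i0"
    using split[of h] assms(3,4) by (simp add: field_simps)
  moreover have "dot (I - {i0}) (\<lambda>i. v i - v i0 * h i / h i0) w
      = dot (I - {i0}) v w - v i0 / h i0 * dot (I - {i0}) h w"
    unfolding dot_def by (simp add: sum_subtractf sum_distrib_left algebra_simps)
  ultimately show ?thesis
    using split[of v] by simp
qed

lemma hyperplane_sign_patterns_subset:
  assumes "finite I" "i0 \<in> I" "h i0 \<noteq> 0"
  shows "sign_pattern I J U ` {w. dot I h w = 0}
    \<subseteq> sign_patterns (I - {i0}) J (\<lambda>j i. U j i - U j i0 * h i / h i0)"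
proof
  fix \<sigma> assume "\<sigma> \<in> sign_pattern I J U ` {w. dot I h w = 0}"
  then obtain w where "\<sigma> = sign_pattern I J U w" and "dot I h w = 0" by blast
  with assms have "\<sigma> = sign_pattern (I - {i0}) J (\<lambda>j i. U j i - U j i0 * h i / h i0) w"
    unfolding sign_pattern_def by (simp add: dot_eliminate_coordinate[of I i0 h w])
  then show "\<sigma> \<in> sign_patterns (I - {i0}) J (\<lambda>j i. U j i - U j i0 * h i / h i0)"
    unfolding sign_patterns_def by blast
qed

text \<open>A pattern on \<open>J\<close> extends in more than one way to \<open>insert a J\<close> only if it is
  realised on the hyperplane \<open>U a \<bottom> w\<close>, and then in at most three ways.\<close>
lemma card_sign_patterns_insert:
  assumes "finite J" "a \<notin> J"
  shows "card (sign_patterns I (insert a J) U)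
    \<le> card (sign_patterns I J U) + 2 * card (sign_pattern I J U ` {w. dot I (U a) w = 0})"
proof -
  let ?\<sigma> = "sign_pattern I J U" and ?s = "\<lambda>w. sgn_of (dot I (U a) w)"
  define P where "P = sign_patterns I J U"
  define Z where "Z = ?\<sigma> ` {w. dot I (U a) w = 0}"
  define T where "T = (\<lambda>w. (?\<sigma> w, ?s w)) ` UNIV"
  define T1 where "T1 = {p \<in> T. fst p \<notin> Z}"
  have "finite P"
    unfolding P_def using assms(1) by (rule finite_sign_patterns)
  moreover have "Z \<subseteq> P"
    unfolding Z_def P_def sign_patterns_def by blast
  ultimately have "finite Z" by (rule finite_subset[rotated])
  have "T \<subseteq> P \<times> UNIV"
    unfolding T_def P_def sign_patterns_def by blast
  with \<open>finite P\<close> have "finite T" by (simp add: finite_subset)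
  have "inj_on fst T1"
  proof (rule inj_onI)
    fix p q assume "p \<in> T1" "q \<in> T1" "fst p = fst q"
    then obtain w1 w2 where p: "p = (?\<sigma> w1, ?s w1)" and q: "q = (?\<sigma> w2, ?s w2)"
      and "?\<sigma> w1 = ?\<sigma> w2" "?\<sigma> w1 \<notin> Z"
      unfolding T1_def T_def by auto
    then have "?s w1 = ?s w2"
      unfolding Z_def using sign_change_gives_hyperplane_pattern by blast
    with p q \<open>?\<sigma> w1 = ?\<sigma> w2\<close> show "p = q" by simp
  qed
  moreover have "fst ` T1 \<subseteq> P - Z"
    unfolding T1_def T_def P_def sign_patterns_def by auto
  ultimately have "card T1 \<le> card (P - Z)"
    using \<open>finite P\<close> by (intro card_inj_on_le) auto
  have "sign_patterns I (insert a J) U = (\<lambda>(\<sigma>, s). \<sigma>(a := s)) ` T"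
    unfolding sign_patterns_def T_def using assms(2) by (auto simp: sign_pattern_insert)
  then have "card (sign_patterns I (insert a J) U) \<le> card T"
    using \<open>finite T\<close> by (simp add: card_image_le)
  also have "\<dots> \<le> card (T1 \<union> Z \<times> UNIV)"
    using \<open>finite T\<close> \<open>finite Z\<close> by (intro card_mono) (auto simp: T1_def)
  also have "\<dots> \<le> card T1 + 3 * card Z"
    using card_Un_le[of T1 "Z \<times> UNIV"] by (simp add: card_cartesian_product UNIV_sgn)
  also have "\<dots> \<le> card P + 2 * card Z"
    using \<open>card T1 \<le> card (P - Z)\<close> \<open>Z \<subseteq> P\<close> \<open>finite Z\<close> card_mono[OF \<open>finite P\<close> \<open>Z \<subseteq> P\<close>]
    by (simp add: card_Diff_subset)
  finally show ?thesis
    unfolding P_def Z_def .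
qed

theorem card_sign_patterns_le:
  assumes "finite J" "finite I"
  shows "card (sign_patterns I J U) \<le> sign_pattern_bound (card J) (card I)"
  using assms
proof (induction J arbitrary: I U rule: finite_induct)
  case empty
  have "sign_patterns I {} U \<subseteq> {\<lambda>_. undefined}"
    unfolding sign_patterns_def sign_pattern_def by auto
  then show ?case
    using card_mono[of "{\<lambda>_. undefined}"] by simp
next
  case (insert a J)
  show ?case
  proof (cases "\<forall>i\<in>I. U a i = 0")
    case True
    then have "sign_patterns I (insert a J) U = (\<lambda>\<sigma>. \<sigma>(a := Zer)) ` sign_patterns I J U"
      using insert.hyps(2)
      by (auto simp: sign_patterns_def sign_pattern_insert dot_def sgn_of_def)
    then have "card (sign_patterns I (insert a J) U) \<le> card (sign_patterns I J U)"
      using card_image_le[OF finite_sign_patterns[OF insert.hyps(1)]] by simp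
    also have "\<dots> \<le> sign_pattern_bound (card J) (card I)"
      using insert.IH insert.prems by blast
    also have "\<dots> \<le> sign_pattern_bound (card (insert a J)) (card I)"
      using insert.hyps by (simp add: sign_pattern_bound_le_Suc)
    finally show ?thesis .
  next
    case False
    then obtain i0 where i0: "i0 \<in> I" "U a i0 \<noteq> 0" by blast
    let ?U' = "\<lambda>j i. U j i - U j i0 * U a i / U a i0"
    have card_I: "card I = Suc (card (I - {i0}))"
      using i0(1) insert.prems by (metis card_Suc_Diff1)
    have "card (sign_pattern I J U ` {w. dot I (U a) w = 0}) \<le> card (sign_patterns (I - {i0}) J ?U')"
      using insert.prems i0 by (intro card_mono[OF finite_sign_patterns[OF insert.hyps(1)]]
        hyperplane_sign_patterns_subset)
    also have "\<dots> \<le> sign_pattern_bound (card J) (card (I - {i0}))"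
      using insert.IH insert.prems by blast
    moreover have "card (sign_patterns I J U) \<le> sign_pattern_bound (card J) (card I)"
      using insert.IH insert.prems by blast
    ultimately have "card (sign_patterns I (insert a J) U)
      \<le> sign_pattern_bound (card J) (card I) + 2 * sign_pattern_bound (card J) (card (I - {i0}))"
      using card_sign_patterns_insert[OF insert.hyps, of I U] by linarith
    then show ?thesis
      using insert.hyps card_I by (simp add: sign_pattern_bound_Suc_Suc)
  qed
qed

lemma sign_pattern_bound_le_power:
  assumes "1 \<le> k" "k \<le> m"
  shows "real (sign_pattern_bound m k) \<le> (2 * exp 1 * real m / real k) ^ k"
proof -
  define r where "r = real m / real k"
  define q where "q = real k / real m"
  have "r \<ge> 1" "q \<ge> 0" "r * q = 1"
    unfolding r_def q_def using assms by auto
  have term_le: "real (m choose i) * 2 ^ i \<le> 2 ^ k * r ^ k * (real (m choose i) * q ^ i)"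
    if "i \<le> k" for i
  proof -
    have "r ^ k * q ^ i = r ^ (k - i) * (r * q) ^ i"
      using that by (simp add: power_mult_distrib power_add[symmetric])
    also have "\<dots> \<ge> 1"
      using \<open>r \<ge> 1\<close> \<open>r * q = 1\<close> by simp
    finally have "r ^ k * q ^ i \<ge> 1" .
    have "(2::real) ^ i \<le> 2 ^ k"
      using that by (simp add: power_increasing)
    then have "real (m choose i) * 2 ^ i \<le> real (m choose i) * 2 ^ k * 1"
      by (simp add: mult_left_mono)
    also have "\<dots> \<le> real (m choose i) * 2 ^ k * (r ^ k * q ^ i)"
      using \<open>r ^ k * q ^ i \<ge> 1\<close> by (intro mult_left_mono) auto
    finally show ?thesis
      by (simp add: algebra_simps)
  qed
  \<comment> \<open>binomial theorem with \<open>q = k/m\<close>, then \<open>1 + q \<le> exp q\<close>\<close>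
  have binomial_le: "(\<Sum>i\<le>k. real (m choose i) * q ^ i) \<le> exp 1 ^ k"
  proof -
    have "(\<Sum>i\<le>k. real (m choose i) * q ^ i) \<le> (\<Sum>i\<le>m. real (m choose i) * q ^ i)"
      using assms \<open>q \<ge> 0\<close> by (intro sum_mono2) auto
    also have "\<dots> = (q + 1) ^ m"
      by (simp add: binomial_ring)
    also have "\<dots> \<le> exp q ^ m"
      using \<open>q \<ge> 0\<close> by (intro power_mono) (auto simp: add.commute)
    also have "\<dots> = exp 1 ^ k"
      using assms unfolding q_def by (simp add: exp_of_nat_mult[symmetric])
    finally show ?thesis .
  qed
  have "real (sign_pattern_bound m k) = (\<Sum>i\<le>k. real (m choose i) * 2 ^ i)"
    by (simp add: sign_pattern_bound_def)
  also have "\<dots> \<le> 2 ^ k * r ^ k * (\<Sum>i\<le>k. real (m choose i) * q ^ i)"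
    unfolding sum_distrib_left by (intro sum_mono term_le) simp
  also have "\<dots> \<le> 2 ^ k * r ^ k * exp 1 ^ k"
    using binomial_le \<open>r \<ge> 1\<close> by (intro mult_left_mono) auto
  also have "\<dots> = (2 * exp 1 * real m / real k) ^ k"
    unfolding r_def by (simp add: power_mult_distrib[symmetric] algebra_simps)
  finally show ?thesis .
qed

lemma ln_2_ge_half: "ln (2::real) \<ge> 1 / 2"
proof -
  have "exp (1 / 2 :: real) ^ 2 = exp 1"
    by (simp add: exp_of_nat_mult[symmetric])
  also have "\<dots> \<le> 2 ^ 2"
    using exp_le by simp
  finally have "exp (1 / 2 :: real) \<le> 2"
    by (rule power2_le_imp_le) simp
  then show ?thesis
    by (metis exp_gt_zero exp_le_cancel_iff exp_ln zero_less_numeral)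
qed

lemma log2_le_half_plus_two:
  assumes "x > 0"
  shows "log 2 x \<le> x / 2 + 2"
proof -
  have "ln (x / 4) \<le> x / 4 - 1"
    using assms by (intro ln_le_minus_one) simp
  moreover have "ln (x / 4) = ln x - 2 * ln 2"
    using assms by (simp add: ln_div ln_realpow[of 2 2, simplified, symmetric])
  ultimately have "ln x / ln 2 \<le> (2 * ln 2 + (x / 4 - 1)) / ln 2"
    by (simp add: divide_right_mono)
  also have "\<dots> = 2 + (x / 4 - 1) / ln 2"
    by (simp add: field_simps)
  also have "(x / 4 - 1) / ln 2 \<le> x / 2"
  proof (cases "x / 4 - 1 \<le> 0")
    case True
    then have "(x / 4 - 1) / ln 2 \<le> 0"
      by (simp add: divide_nonpos_pos)
    then show ?thesis
      using assms by linarith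
  next
    case False
    then have "(x / 4 - 1) / ln 2 \<le> (x / 4 - 1) / (1 / 2)"
      using ln_2_ge_half by (intro divide_left_mono) auto
    also have "\<dots> \<le> x / 2"
      by simp
    finally show ?thesis .
  qed
  finally show ?thesis
    by (simp add: log_def add.commute)
qed

text \<open>Taking logarithms, \<open>d \<le> log g + \<eta> log c + \<eta> log (d/\<eta>)\<close>, and the last
  term is at most \<open>d/2 + 2\<eta>\<close>.\<close>
lemma two_power_le_polynomial_imp_le:
  fixes d eta :: nat and c g :: real
  assumes "d > 0" "eta > 0" "c > 0" "g > 0"
    and "2 ^ d \<le> g * (c * real d / real eta) ^ eta"
  shows "real d \<le> 2 * log 2 g + 2 * real eta * log 2 (4 * c)"
proof -
  define x where "x = real d / real eta"
  have "x > 0" unfolding x_def using assms by simp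
  have "log 2 (4::real) = 2"
    using log_pow_cancel[of 2 2] by simp
  have "real d = log 2 (2 ^ d)"
    by (simp add: log_nat_power)
  also have "\<dots> \<le> log 2 (g * (c * x) ^ eta)"
    using assms \<open>x > 0\<close> unfolding x_def by (subst log_le_cancel_iff) auto
  also have "\<dots> = log 2 g + real eta * (log 2 c + log 2 x)"
    using assms \<open>x > 0\<close> by (simp add: log_mult_pos log_nat_power)
  also have "\<dots> \<le> log 2 g + real eta * (log 2 c + (x / 2 + 2))"
    using log2_le_half_plus_two[OF \<open>x > 0\<close>] by (simp add: mult_left_mono)
  also have "\<dots> = log 2 g + real eta * log 2 (4 * c) + real d / 2"
    using assms \<open>log 2 4 = 2\<close> unfolding x_def by (simp add: log_mult_pos algebra_simps)
  finally show ?thesis by simp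
qed

lemma one_le_log2_8eK:
  assumes "K \<ge> 1"
  shows "1 \<le> log 2 (8 * exp 1 * real K)"
proof -
  have "1 * 1 \<le> exp 1 * real K"
    using assms by (intro mult_mono) auto
  then have "2 \<le> 8 * exp 1 * real K"
    by linarith
  then show ?thesis
    using le_log_iff[of 2 "8 * exp 1 * real K" 1] by simp
qed

lemma two_power_le_sign_pattern_bound_imp_le:
  fixes d K eta :: nat and g :: real
  assumes "K \<ge> 1" "g \<ge> 1" and two_power_le: "2 ^ d \<le> g * real (sign_pattern_bound (d * K) eta)"
  shows "real d \<le> 2 * real eta * log 2 (8 * exp 1 * real K) + 2 * log 2 g"
proof -
  have "log 2 (8 * exp 1 * real K) \<ge> 1"
    using assms(1) by (rule one_le_log2_8eK)
  have "log 2 g \<ge> 0"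
    using assms(2) by simp
  consider "eta = 0" | "0 < eta" "d * K < eta" | "0 < eta" "eta \<le> d * K"
    by linarith
  then show ?thesis
  proof cases
    case 1
    have "real d = log 2 (2 ^ d)"
      by (simp add: log_nat_power)
    also have "\<dots> \<le> log 2 g"
      using 1 two_power_le by (intro log_mono) simp_all
    finally have "real d \<le> log 2 g" .
    then show ?thesis
      using 1 \<open>log 2 g \<ge> 0\<close> by simp
  next
    case 2
    have "d \<le> d * K"
      using assms(1) by simp
    then have "d \<le> eta"
      using 2 by linarith
    then have "real d \<le> real eta"
      by simp
    also have "\<dots> \<le> 2 * real eta * log 2 (8 * exp 1 * real K)"
      using mult_left_mono[OF \<open>log 2 (8 * exp 1 * real K) \<ge> 1\<close>, of "real eta"] by simp
    finally show ?thesis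
      using \<open>log 2 g \<ge> 0\<close> by simp
  next
    case 3
    then have "d > 0"
      by (cases d) auto
    define c where "c = 2 * exp 1 * real K"
    have "c > 0"
      using assms(1) unfolding c_def by simp
    have "real (sign_pattern_bound (d * K) eta) \<le> (2 * exp 1 * real (d * K) / real eta) ^ eta"
      using 3 by (intro sign_pattern_bound_le_power) auto
    also have "\<dots> = (c * real d / real eta) ^ eta"
      unfolding c_def by (simp add: ac_simps)
    finally have "g * real (sign_pattern_bound (d * K) eta) \<le> g * (c * real d / real eta) ^ eta"
      using assms(2) by (intro mult_left_mono) auto
    with two_power_le have "2 ^ d \<le> g * (c * real d / real eta) ^ eta"
      by linarith
    with \<open>d > 0\<close> \<open>0 < eta\<close> \<open>c > 0\<close> assms(2)
    have "real d \<le> 2 * log 2 g + 2 * real eta * log 2 (4 * c)"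
      by (intro two_power_le_polynomial_imp_le) auto
    moreover have "4 * c = 8 * exp 1 * real K"
      unfolding c_def by simp
    ultimately show ?thesis
      by simp
  qed
qed

lemma N_shatters_two_power_le_card:
  assumes "N_shatters F PP" and "finite ((\<lambda>f. restrict f PP) ` F)"
  shows "2 ^ card PP \<le> card ((\<lambda>f. restrict f PP) ` F)"
proof -
  obtain f0 f1 where "\<forall>P\<in>PP. f0 P \<noteq> f1 P"
    and realised: "\<And>B. B \<subseteq> PP \<Longrightarrow> \<exists>f\<in>F. (\<forall>P\<in>B. f P = f0 P) \<and> (\<forall>P\<in>PP - B. f P = f1 P)"
    using assms(1) unfolding N_shatters_def by blast
  have "Pow PP \<subseteq> (\<lambda>r. {P \<in> PP. r P = f0 P}) ` (\<lambda>f. restrict f PP) ` F"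
  proof
    fix B assume "B \<in> Pow PP"
    then obtain f where "f \<in> F" "\<forall>P\<in>B. f P = f0 P" "\<forall>P\<in>PP - B. f P = f1 P"
      using realised by blast
    with \<open>B \<in> Pow PP\<close> \<open>\<forall>P\<in>PP. f0 P \<noteq> f1 P\<close> have "B = {P \<in> PP. f P = f0 P}"
      by auto (metis DiffI)
    then have "B = {P \<in> PP. restrict f PP P = f0 P}"
      by auto
    with \<open>f \<in> F\<close> show "B \<in> (\<lambda>r. {P \<in> PP. r P = f0 P}) ` (\<lambda>f. restrict f PP) ` F"
      by blast
  qed
  then have "card (Pow PP) \<le> card ((\<lambda>f. restrict f PP) ` F)"
    using assms(2) by (rule surj_card_le[rotated])
  then show ?thesis
    using assms(1) by (simp add: N_shatters_def card_Pow)
qed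

lemma restrict_F_class_subset:
  "(\<lambda>f. restrict f PP) ` F_class K eta psi G \<subseteq>
     (\<lambda>(g, \<sigma>). restrict (\<lambda>P. g (map (\<lambda>k. \<sigma> (P, k)) [1..<K+1])) PP) `
       (G \<times> sign_patterns {..<eta} (PP \<times> {1..K}) (\<lambda>(P, k). psi P k))"
proof
  fix r assume "r \<in> (\<lambda>f. restrict f PP) ` F_class K eta psi G"
  then obtain w g where "g \<in> G" and r: "r = restrict (f_wg K eta psi w g) PP"
    unfolding F_class_def by blast
  let ?\<sigma> = "sign_pattern {..<eta} (PP \<times> {1..K}) (\<lambda>(P, k). psi P k) w"
  have "r = (\<lambda>(g, \<sigma>). restrict (\<lambda>P. g (map (\<lambda>k. \<sigma> (P, k)) [1..<K+1])) PP) (g, ?\<sigma>)"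
    unfolding r f_wg_def sign_pattern_def dotp_def dot_def
    by (auto intro!: arg_cong[where f = g] simp: fun_eq_iff)
  moreover have "(g, ?\<sigma>) \<in> G \<times> sign_patterns {..<eta} (PP \<times> {1..K}) (\<lambda>(P, k). psi P k)"
    using \<open>g \<in> G\<close> unfolding sign_patterns_def by blast
  ultimately show "r \<in> (\<lambda>(g, \<sigma>). restrict (\<lambda>P. g (map (\<lambda>k. \<sigma> (P, k)) [1..<K+1])) PP) `
       (G \<times> sign_patterns {..<eta} (PP \<times> {1..K}) (\<lambda>(P, k). psi P k))"
    by (metis (no_types, lifting) rev_image_eqI)
qed

lemma N_shatters_F_class_card_le:
  assumes "K \<ge> 1" "finite G" "G \<noteq> {}" and shatters: "N_shatters (F_class K eta psi G) PP"
  shows "real (card PP) \<le> 2 * real eta * log 2 (8 * exp 1 * real K) + 2 * log 2 (real (card G))"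
proof -
  let ?R = "(\<lambda>f. restrict f PP) ` F_class K eta psi G"
  let ?S = "sign_patterns {..<eta} (PP \<times> {1..K}) (\<lambda>(P, k). psi P k)"
  have "finite PP"
    using shatters by (simp add: N_shatters_def)
  then have "finite (G \<times> ?S)"
    using assms(2) by (simp add: finite_sign_patterns)
  moreover obtain \<Phi> where "?R \<subseteq> \<Phi> ` (G \<times> ?S)"
    using restrict_F_class_subset by blast
  ultimately have "finite ?R" and "card ?R \<le> card (G \<times> ?S)"
    by (blast intro: finite_surj, rule surj_card_le)
  then have "2 ^ card PP \<le> card (G \<times> ?S)"
    using N_shatters_two_power_le_card[OF shatters] by linarith
  also have "\<dots> = card G * card ?S"
    by (rule card_cartesian_product)
  also have "\<dots> \<le> card G * sign_pattern_bound (card (PP \<times> {1..K})) (card {..<eta})"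
    using card_sign_patterns_le[of "PP \<times> {1..K}" "{..<eta}"] \<open>finite PP\<close> by simp
  also have "\<dots> = card G * sign_pattern_bound (card PP * K) eta"
    by (simp add: card_cartesian_product)
  finally have "2 ^ card PP \<le> real (card G) * real (sign_pattern_bound (card PP * K) eta)"
    by (metis of_nat_le_iff of_nat_mult of_nat_numeral of_nat_power)
  moreover have "real (card G) \<ge> 1"
    using assms(2,3) by (simp add: Suc_le_eq card_gt_0_iff)
  ultimately show ?thesis
    using two_power_le_sign_pattern_bound_imp_le[OF assms(1)] by blast
qed

lemma Ndim_le_if_shattered_card_le:
  assumes "B \<ge> 0" and "\<And>PP. N_shatters F PP \<Longrightarrow> real (card PP) \<le> B"
  shows "Ndim F \<noteq> \<infinity> \<and> real (the_enat (Ndim F)) \<le> B"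
proof -
  have "Ndim F \<le> enat (nat \<lfloor>B\<rfloor>)"
    unfolding Ndim_def using assms(2) by (auto intro!: Sup_least simp: le_nat_floor)
  then obtain n where "Ndim F = enat n" "n \<le> nat \<lfloor>B\<rfloor>"
    by (cases "Ndim F") auto
  moreover have "real (nat \<lfloor>B\<rfloor>) \<le> B"
    using assms(1) by simp
  ultimately show ?thesis
    by simp
qed

theorem theorem11:
  fixes K eta :: nat
    and psi :: "'e list \<Rightarrow> nat \<Rightarrow> nat \<Rightarrow> real"
    and G :: "(sgn list \<Rightarrow> 'd) set"
  assumes "K \<ge> 1"
    and "finite G" and "G \<noteq> {}"
    and "\<forall>g\<in>G. \<forall>s. length s \<noteq> K \<longrightarrow> g s = undefined"
  shows "Ndim (F_class K eta psi G) \<noteq> \<infinity> \<and>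
         real (the_enat (Ndim (F_class K eta psi G)))
           \<le> 2 * real eta * log 2 (8 * exp 1 * real K) + 2 * log 2 (real (card G))"
proof (rule Ndim_le_if_shattered_card_le)
  have "log 2 (8 * exp 1 * real K) \<ge> 0"
    using one_le_log2_8eK[OF assms(1)] by simp
  moreover have "log 2 (real (card G)) \<ge> 0"
    using assms(2,3) by (simp add: Suc_le_eq card_gt_0_iff)
  ultimately show "0 \<le> 2 * real eta * log 2 (8 * exp 1 * real K) + 2 * log 2 (real (card G))"
    by simp
  show "real (card PP) \<le> 2 * real eta * log 2 (8 * exp 1 * real K) + 2 * log 2 (real (card G))"
    if "N_shatters (F_class K eta psi G) PP" for PP
    using N_shatters_F_class_card_le[OF assms(1-3) that] .
qed

end
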